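(* Let $n\geq 2$ and let $T$ be a rooted binary phylogenetic $X$-tree with $|X|=n$ (edge lengths not yet fixed), with $c_T$ cherries. Let $X'\subset X$ consist of exactly one leaf from each cherry of $T$ (so $|X'|=c_T$), and let $\widetilde T=T_{\widetilde X}$ with $\widetilde X=X\setminus X'$. Then there exist strictly positive edge lengths $\lambda_1,\ldots,\lambda_{2n-2}$ for $T$ such that the ranking $\pi_T$ is strict and reversible with respect to $X'$, the leaf $x_1=\arg\max_{x\in X}FP_T(x)$ belongs to $\widetilde X$, and the leaf $x'=\arg\min_{x\in X}FP_T(x)$ does not belong to $\widetilde X$. In particular, $FP_T(x_1)>FP_T(x_2)>\cdots>FP_T(x_n)$ for a suitable labelling, and $FP_{\widetilde T}(x_1)<FP_{\widetilde T}(\widetilde x_2)<\cdots<FP_{\widetilde T}(\widetilde x_{n-c_T})$, where $\widetilde X=\{x_1,\widetilde x_2,\ldots,\widetilde x_{n-c_T}\}$ and $FP_T(\widetilde x_i)>FP_T(\widetilde x_j)$ if and only if $FP_{\widetilde T}(\widetilde x_i)<FP_{\widetilde T}(\widetilde x_j)$.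
   Context: A rooted binary phylogenetic $X$-tree ($X$ a finite nonempty set, $|X|=n$) is a rooted tree whose root $\rho$ has in-degree 0 and out-degree 2, all edges directed away from $\rho$, all other interior vertices have in-degree 1 and out-degree 2, and whose leaves are bijectively labelled by $X$ (for $|X|=1$ the tree may be a single vertex); it has $2n-2$ edges. Every edge $e$ has a strictly positive length $\lambda_e$. The Fair Proportion index of $x\in X$ is $FP_T(x)=\sum_{e\in P(T;\rho,x)}\lambda_e/D_e$, where $P(T;\rho,x)$ is the path from $\rho$ to $x$ and $D_e$ is the number of leaves descended from $e$. A cherry is a pair of leaves with the same parent. For $Y\subseteq X$, the induced subtree $T_Y$ is obtained from the minimal subtree of $T$ connecting $Y$ by suppressing all non-root vertices of in- and out-degree 1, adding the lengths of merged edges; if the root then has out-degree 1, it and its incident edge are deleted. The ranking $\pi_T$ orders $X$ by decreasing $FP_T$; it is strict if all values $FP_T(x)$ are pairwise distinct. For $X'\subset X$, $\widetilde X=X\setminus X'$ and $\widetilde T=T_{\widetilde X}$, a strict ranking $\pi_T$ is reversible with respect to $X'$ if for all distinct $x_i,x_j\in\widetilde X$, $FP_T(x_i)>FP_T(x_j)$ implies $FP_{\widetilde T}(x_i)<FP_{\widetilde T}(x_j)$. *)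

theory Defs
  imports Main "HOL.Real"
begin

datatype 'a ptree = PLeaf 'a | PNode "'a ptree" "'a ptree"

text \<open>Rooted binary tree with edge lengths: WNode a l b r has an edge of length a
  to the left subtree l and an edge of length b to the right subtree r.\<close>
datatype 'a wtree = WLeaf 'a | WNode real "'a wtree" real "'a wtree"

fun pleaves :: "'a ptree \<Rightarrow> 'a list" where
  "pleaves (PLeaf x) = [x]"
| "pleaves (PNode l r) = pleaves l @ pleaves r"

definition phylo_tree :: "'a set \<Rightarrow> 'a ptree \<Rightarrow> bool" where
  "phylo_tree X T \<longleftrightarrow> distinct (pleaves T) \<and> set (pleaves T) = X"

fun shape :: "'a wtree \<Rightarrow> 'a ptree" where
  "shape (WLeaf x) = PLeaf x"
| "shape (WNode a l b r) = PNode (shape l) (shape r)"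

fun wleaves :: "'a wtree \<Rightarrow> 'a set" where
  "wleaves (WLeaf x) = {x}"
| "wleaves (WNode a l b r) = wleaves l \<union> wleaves r"

fun pos_lengths :: "'a wtree \<Rightarrow> bool" where
  "pos_lengths (WLeaf x) = True"
| "pos_lengths (WNode a l b r) = (a > 0 \<and> b > 0 \<and> pos_lengths l \<and> pos_lengths r)"

fun FP :: "'a wtree \<Rightarrow> 'a \<Rightarrow> real" where
  "FP (WLeaf y) x = 0"
| "FP (WNode a l b r) x =
     (if x \<in> wleaves l then a / real (card (wleaves l)) + FP l x else 0)
   + (if x \<in> wleaves r then b / real (card (wleaves r)) + FP r x else 0)"

fun cherries :: "'a ptree \<Rightarrow> 'a set set" where
  "cherries (PLeaf x) = {}"
| "cherries (PNode (PLeaf x) (PLeaf y)) = {{x, y}}"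
| "cherries (PNode l r) = cherries l \<union> cherries r"

text \<open>Restriction to Y: None if the subtree has no leaf in Y; otherwise
  Some (p, t') where t' is the restricted (suppressed) subtree and p is the
  accumulated length of suppressed edges that must be added to the edge
  entering this subtree.\<close>
fun restr :: "'a set \<Rightarrow> 'a wtree \<Rightarrow> (real \<times> 'a wtree) option" where
  "restr Y (WLeaf x) = (if x \<in> Y then Some (0, WLeaf x) else None)"
| "restr Y (WNode a l b r) =
     (case (restr Y l, restr Y r) of
        (Some (p, l'), Some (q, r')) \<Rightarrow> Some (0, WNode (a + p) l' (b + q) r')
      | (Some (p, l'), None) \<Rightarrow> Some (a + p, l')
      | (None, Some (q, r')) \<Rightarrow> Some (b + q, r')
      | (None, None) \<Rightarrow> None)"

text \<open>Induced subtree T_Y (for nonempty Y meeting the leaves): the root edge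
  created when the root gets out-degree 1 is deleted.\<close>
definition induced :: "'a set \<Rightarrow> 'a wtree \<Rightarrow> 'a wtree" where
  "induced Y T = snd (the (restr Y T))"

definition strict_ranking :: "'a set \<Rightarrow> 'a wtree \<Rightarrow> bool" where
  "strict_ranking X T \<longleftrightarrow> inj_on (FP T) X"

definition reversible :: "'a set \<Rightarrow> 'a wtree \<Rightarrow> 'a set \<Rightarrow> bool" where
  "reversible X T X' \<longleftrightarrow> strict_ranking X T \<and>
     (\<forall>xi\<in>X - X'. \<forall>xj\<in>X - X'. xi \<noteq> xj \<longrightarrow>
        FP T xi > FP T xj \<longrightarrow> FP (induced (X - X') T) xi < FP (induced (X - X') T) xj)"

end

theory Submission
  imports Defs
begin

(* Let Y = X - X'. An internal edge above a clade C of length w / (1/|C \<inter> Y| - 1/|C|)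
   contributes exactly w more to FP in T_Y than in T at every leaf of C \<inter> Y. Taking
   w = e and w = 2e at the two children of a vertex and recursing with e/4 makes the
   accumulated surplus D(x) injective on Y; this needs every clade to contain leaves both
   in Y and in X', which is what removing one leaf of each cherry guarantees. Pendant edges
   shift FP_T(x) and FP_(T_Y)(x) by the same amount, so they can be chosen to give
   FP_T(x) = K - D(x)/2 on Y, hence FP_(T_Y)(x) = K + D(x)/2 - c, while the leaves of X'
   receive distinct smaller values. *)

(* FP with the descendant count D_e replaced by N applied to the leaf set below e.
   For N S = |S \<inter> Y| this is FP in T_Y up to an additive constant (FP_induced). *)
fun FP_by :: "('a set \<Rightarrow> nat) \<Rightarrow> 'a wtree \<Rightarrow> 'a \<Rightarrow> real" where
  "FP_by N (WLeaf y) x = 0"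
| "FP_by N (WNode a l b r) x =
     (if x \<in> wleaves l then a / real (N (wleaves l)) + FP_by N l x else 0)
   + (if x \<in> wleaves r then b / real (N (wleaves r)) + FP_by N r x else 0)"

lemma FP_eq_FP_by_card: "FP W x = FP_by card W x"
  by (induction W) auto

lemma restr_eq_None_iff: "restr Y W = None \<longleftrightarrow> wleaves W \<inter> Y = {}"
  by (induction W) (auto split: option.splits)

lemma wleaves_restr: "restr Y W = Some (q, t') \<Longrightarrow> wleaves t' = wleaves W \<inter> Y"
  by (induction W arbitrary: q t') (auto split: option.splits if_splits simp: restr_eq_None_iff)

lemma FP_restr:
  assumes "restr Y W = Some (q, t')" and "x \<in> wleaves W \<inter> Y"
  shows "q / real (card (wleaves t')) + FP t' x = FP_by (\<lambda>S. card (S \<inter> Y)) W x"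
  using assms
proof (induction W arbitrary: q t')
  case (WLeaf y)
  then show ?case by (auto split: if_splits)
next
  case (WNode a l b r)
  let ?N = "\<lambda>S. card (S \<inter> Y)"
  have "x \<in> Y" using WNode.prems(2) by blast
  have edge: "(if x \<in> wleaves u' then (c + q') / real (card (wleaves u')) + FP u' x else 0)
    = (if x \<in> wleaves u then c / real (?N (wleaves u)) + FP_by ?N u x else 0)"
    if u: "restr Y u = Some (q', u')"
      and IH: "\<And>q t'. restr Y u = Some (q, t') \<Longrightarrow> x \<in> wleaves u \<inter> Y
                 \<Longrightarrow> q / real (card (wleaves t')) + FP t' x = FP_by ?N u x" for c q' u u'
    using wleaves_restr[OF u] IH[OF u] \<open>x \<in> Y\<close> by (simp add: add_divide_distrib)
  show ?case
  proof (cases "restr Y l"; cases "restr Y r")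
    fix rl
    assume l: "restr Y l = None" and r: "restr Y r = Some rl"
    obtain q2 r' where r': "restr Y r = Some (q2, r')" using r by (cases rl) auto
    have "x \<notin> wleaves l" using restr_eq_None_iff[THEN iffD1, OF l] \<open>x \<in> Y\<close> by blast
    then show ?thesis using WNode.prems edge[OF r' WNode.IH(2), of b] l r' wleaves_restr[OF r'] by auto
  next
    fix ql
    assume l: "restr Y l = Some ql" and r: "restr Y r = None"
    obtain q1 l' where l': "restr Y l = Some (q1, l')" using l by (cases ql) auto
    have "x \<notin> wleaves r" using restr_eq_None_iff[THEN iffD1, OF r] \<open>x \<in> Y\<close> by blast
    then show ?thesis using WNode.prems edge[OF l' WNode.IH(1), of a] l' r wleaves_restr[OF l'] by auto
  next
    fix ql rl
    assume l: "restr Y l = Some ql" and r: "restr Y r = Some rl"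
    obtain q1 l' where l': "restr Y l = Some (q1, l')" using l by (cases ql) auto
    obtain q2 r' where r': "restr Y r = Some (q2, r')" using r by (cases rl) auto
    have "q = 0" "t' = WNode (a + q1) l' (b + q2) r'" using WNode.prems(1) l' r' by auto
    then show ?thesis using edge[OF l' WNode.IH(1), of a] edge[OF r' WNode.IH(2), of b] by simp
  qed (use WNode in auto)
qed

lemma FP_induced:
  assumes "wleaves W \<inter> Y \<noteq> {}"
  obtains c where "\<And>x. x \<in> wleaves W \<inter> Y
    \<Longrightarrow> FP (induced Y W) x + c = FP_by (\<lambda>S. card (S \<inter> Y)) W x"
proof -
  obtain q t' where r: "restr Y W = Some (q, t')"
    using assms restr_eq_None_iff[of Y W] by fastforce
  show thesis
    by (rule that[of "q / real (card (wleaves t'))"])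
      (use FP_restr[OF r] r in \<open>simp add: induced_def add.commute\<close>)
qed

fun clades_straddle :: "'a set \<Rightarrow> 'a ptree \<Rightarrow> bool" where
  "clades_straddle Y (PLeaf x) \<longleftrightarrow> True"
| "clades_straddle Y (PNode l r) \<longleftrightarrow> clades_straddle Y l \<and> clades_straddle Y r \<and>
     set (pleaves (PNode l r)) \<inter> Y \<noteq> {} \<and> \<not> set (pleaves (PNode l r)) \<subseteq> Y"

lemma cherries_eq_empty_iff: "cherries t = {} \<longleftrightarrow> (\<exists>x. t = PLeaf x)"
  by (induction t rule: cherries.induct) auto

lemma cherries_subtrees: "cherries l \<union> cherries r \<subseteq> cherries (PNode l r)"
  by (cases l; cases r) auto

lemma cherry_subset_leaves: "c \<in> cherries t \<Longrightarrow> c \<subseteq> set (pleaves t)"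
  by (induction t rule: cherries.induct) auto

lemma card_cherry: "c \<in> cherries t \<Longrightarrow> distinct (pleaves t) \<Longrightarrow> card c = 2"
  by (induction t rule: cherries.induct) force+

lemma clades_straddle_if_cherries_straddle:
  "\<forall>c\<in>cherries t. c \<inter> Y \<noteq> {} \<and> \<not> c \<subseteq> Y \<Longrightarrow> clades_straddle Y t"
proof (induction t)
  case (PNode l r)
  have "clades_straddle Y l" and "clades_straddle Y r"
    using PNode cherries_subtrees[of l r] by blast+
  moreover obtain c where c: "c \<in> cherries (PNode l r)"
    using cherries_eq_empty_iff[of "PNode l r"] by blast
  have "c \<subseteq> set (pleaves (PNode l r))" and "c \<inter> Y \<noteq> {}" and "\<not> c \<subseteq> Y"
    using cherry_subset_leaves[OF c] PNode.prems c by blast+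
  then have "set (pleaves (PNode l r)) \<inter> Y \<noteq> {} \<and> \<not> set (pleaves (PNode l r)) \<subseteq> Y"
    by blast
  ultimately show ?case unfolding clades_straddle.simps by blast
qed simp

lemma clades_straddle_one_per_cherry:
  assumes "phylo_tree X T" and "\<forall>c\<in>cherries T. card (X' \<inter> c) = 1"
  shows "clades_straddle (X - X') T"
proof (rule clades_straddle_if_cherries_straddle, intro ballI)
  fix c assume c: "c \<in> cherries T"
  then have "c \<subseteq> X" and "card c = 2" and one: "card (X' \<inter> c) = 1"
    using assms cherry_subset_leaves card_cherry unfolding phylo_tree_def by auto
  have "c \<inter> (X - X') \<noteq> {}"
  proof
    assume "c \<inter> (X - X') = {}"
    then have "X' \<inter> c = c" using \<open>c \<subseteq> X\<close> by blast
    then show False using one \<open>card c = 2\<close> by simp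
  qed
  moreover have "\<not> c \<subseteq> X - X'"
  proof
    assume "c \<subseteq> X - X'"
    then have "X' \<inter> c = {}" by blast
    then show False using one by simp
  qed
  ultimately show "c \<inter> (X - X') \<noteq> {} \<and> \<not> c \<subseteq> X - X'" ..
qed

definition count_gap :: "'a set \<Rightarrow> 'a set \<Rightarrow> real" where
  "count_gap Y S = 1 / real (card (S \<inter> Y)) - 1 / real (card S)"

lemma count_gap_pos:
  assumes "finite S" and "S \<inter> Y \<noteq> {}" and "\<not> S \<subseteq> Y"
  shows "count_gap Y S > 0"
proof -
  have "0 < card (S \<inter> Y)" using assms by (simp add: card_gt_0_iff)
  moreover have "card (S \<inter> Y) < card S" using assms by (intro psubset_card_mono) auto
  ultimately show ?thesis unfolding count_gap_def by (simp add: frac_less2)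
qed

(* An internal edge of length w / count_gap above a clade C adds exactly w to FP_shift
   at every leaf of C \<inter> Y (FP_shift_edge); pendant edges get the free length p x. *)
definition edge_len :: "'a set \<Rightarrow> ('a \<Rightarrow> real) \<Rightarrow> real \<Rightarrow> 'a ptree \<Rightarrow> real" where
  "edge_len Y p w t =
     (case t of PLeaf x \<Rightarrow> p x | PNode _ _ \<Rightarrow> w / count_gap Y (set (pleaves t)))"

(* The weights e and 2e at the two children, and e/4 below them, keep the shifts of the
   leaves of the two subtrees in the disjoint ranges [e, 7e/4) and [2e, 11e/4). *)
fun assign_lengths :: "'a set \<Rightarrow> ('a \<Rightarrow> real) \<Rightarrow> real \<Rightarrow> 'a ptree \<Rightarrow> 'a wtree" where
  "assign_lengths Y p e (PLeaf x) = WLeaf x"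
| "assign_lengths Y p e (PNode l r) =
     WNode (edge_len Y p e l) (assign_lengths Y p (e / 4) l)
           (edge_len Y p (2 * e) r) (assign_lengths Y p (e / 4) r)"

lemma wleaves_assign_lengths [simp]: "wleaves (assign_lengths Y p e t) = set (pleaves t)"
  by (induction t arbitrary: e) auto

lemma shape_assign_lengths [simp]: "shape (assign_lengths Y p e t) = t"
  by (induction t arbitrary: e) auto

lemma edge_len_pos:
  assumes "clades_straddle Y t" and "w > 0" and "\<forall>x\<in>set (pleaves t). p x > 0"
  shows "edge_len Y p w t > 0"
proof (cases t)
  case (PNode l r)
  have "count_gap Y (set (pleaves t)) > 0"
    using assms(1) PNode by (intro count_gap_pos) auto
  then show ?thesis using assms(2) PNode by (simp add: edge_len_def)
qed (use assms in \<open>simp add: edge_len_def\<close>)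

lemma pos_lengths_assign_lengths:
  "clades_straddle Y t \<Longrightarrow> e > 0 \<Longrightarrow> \<forall>x\<in>set (pleaves t). p x > 0
    \<Longrightarrow> pos_lengths (assign_lengths Y p e t)"
  by (induction t arbitrary: e) (auto intro!: edge_len_pos)

lemma edge_FP_by_assign_lengths_pendant:
  assumes "distinct (pleaves t)" and "x \<in> set (pleaves t)" and "N {x} = 1"
  shows "edge_len Y p w t / real (N (set (pleaves t))) + FP_by N (assign_lengths Y p e t) x - p x
       = edge_len Y q w t / real (N (set (pleaves t))) + FP_by N (assign_lengths Y q e t) x - q x"
  using assms
proof (induction t arbitrary: w e)
  case (PLeaf z)
  then show ?case by (simp add: edge_len_def)
next
  case (PNode l r)
  have "FP_by N (assign_lengths Y p e (PNode l r)) x - p x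
      = FP_by N (assign_lengths Y q e (PNode l r)) x - q x"
    using PNode.prems PNode.IH(1)[of e "e / 4"] PNode.IH(2)[of "2 * e" "e / 4"] by auto
  then show ?case by (simp add: edge_len_def)
qed

lemma FP_by_assign_lengths_pendant:
  assumes "distinct (pleaves (PNode l r))" and "x \<in> set (pleaves (PNode l r))" and "N {x} = 1"
  shows "FP_by N (assign_lengths Y p e (PNode l r)) x - p x
       = FP_by N (assign_lengths Y q e (PNode l r)) x - q x"
proof -
  have "edge_len Y p 1 (PNode l r) = edge_len Y q 1 (PNode l r)" by (simp add: edge_len_def)
  then show ?thesis
    using edge_FP_by_assign_lengths_pendant[of "PNode l r" x N Y p 1 e q] assms by simp
qed

definition FP_shift :: "'a set \<Rightarrow> 'a wtree \<Rightarrow> 'a \<Rightarrow> real" where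
  "FP_shift Y W x = FP_by (\<lambda>S. card (S \<inter> Y)) W x - FP W x"

lemma FP_shift_WLeaf [simp]: "FP_shift Y (WLeaf z) x = 0"
  by (simp add: FP_shift_def)

lemma FP_shift_assign_lengths_pendant:
  assumes "distinct (pleaves (PNode l r))" and "x \<in> set (pleaves (PNode l r))" and "x \<in> Y"
  shows "FP_shift Y (assign_lengths Y p e (PNode l r)) x = FP_shift Y (assign_lengths Y q e (PNode l r)) x"
  using FP_by_assign_lengths_pendant[OF assms(1,2), of card Y p e q]
    FP_by_assign_lengths_pendant[OF assms(1,2), of "\<lambda>S. card (S \<inter> Y)" Y p e q] assms(3)
  by (simp add: FP_shift_def FP_eq_FP_by_card)

lemma FP_shift_edge:
  assumes "clades_straddle Y c" and "x \<in> set (pleaves c)" and "x \<in> Y"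
  shows "edge_len Y p w c / real (card (set (pleaves c) \<inter> Y))
           + FP_by (\<lambda>S. card (S \<inter> Y)) (assign_lengths Y p e c) x
         - (edge_len Y p w c / real (card (set (pleaves c))) + FP (assign_lengths Y p e c) x)
       = (case c of PLeaf _ \<Rightarrow> 0 | PNode _ _ \<Rightarrow> w) + FP_shift Y (assign_lengths Y p e c) x"
proof (cases c)
  case (PLeaf z)
  then show ?thesis using assms by (simp add: FP_shift_def)
next
  case (PNode l r)
  have "count_gap Y (set (pleaves c)) > 0"
    using assms(1) PNode by (intro count_gap_pos) auto
  then have "edge_len Y p w c * count_gap Y (set (pleaves c)) = w"
    using PNode by (simp add: edge_len_def)
  then show ?thesis
    using PNode by (simp add: FP_shift_def count_gap_def right_diff_distrib)
qed

lemma FP_shift_assign_lengths_left: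
  assumes "clades_straddle Y (PNode l r)" and "distinct (pleaves (PNode l r))"
    and "x \<in> set (pleaves l)" and "x \<in> Y"
  shows "FP_shift Y (assign_lengths Y p e (PNode l r)) x
       = (case l of PLeaf _ \<Rightarrow> 0 | PNode _ _ \<Rightarrow> e) + FP_shift Y (assign_lengths Y p (e / 4) l) x"
proof -
  have "x \<notin> set (pleaves r)" using assms(2,3) by auto
  then show ?thesis
    using FP_shift_edge[of Y l x p e "e / 4"] assms by (simp add: FP_shift_def)
qed

lemma FP_shift_assign_lengths_right:
  assumes "clades_straddle Y (PNode l r)" and "distinct (pleaves (PNode l r))"
    and "x \<in> set (pleaves r)" and "x \<in> Y"
  shows "FP_shift Y (assign_lengths Y p e (PNode l r)) x
       = (case r of PLeaf _ \<Rightarrow> 0 | PNode _ _ \<Rightarrow> 2 * e) + FP_shift Y (assign_lengths Y p (e / 4) r) x"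
proof -
  have "x \<notin> set (pleaves l)" using assms(2,3) by auto
  then show ?thesis
    using FP_shift_edge[of Y r x p "2 * e" "e / 4"] assms by (simp add: FP_shift_def)
qed

lemma FP_shift_assign_lengths_bounds:
  assumes "clades_straddle Y t" and "distinct (pleaves t)" and "e > 0"
    and "x \<in> set (pleaves t)" and "x \<in> Y"
  shows "0 \<le> FP_shift Y (assign_lengths Y p e t) x \<and> FP_shift Y (assign_lengths Y p e t) x < 3 * e"
  using assms
proof (induction t arbitrary: e)
  case (PLeaf z)
  then show ?case by simp
next
  case (PNode l r)
  from PNode.prems(4) consider "x \<in> set (pleaves l)" | "x \<in> set (pleaves r)" by auto
  then show ?case
  proof cases
    case 1
    have "0 \<le> FP_shift Y (assign_lengths Y p (e / 4) l) x"
      "FP_shift Y (assign_lengths Y p (e / 4) l) x < 3 * (e / 4)"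
      using PNode.IH(1)[of "e / 4"] PNode.prems 1 by simp_all
    moreover have "(case l of PLeaf _ \<Rightarrow> 0 | PNode _ _ \<Rightarrow> e) \<in> {0, e}" by (cases l) auto
    ultimately show ?thesis
      using FP_shift_assign_lengths_left[OF PNode.prems(1,2) 1 PNode.prems(5)] PNode.prems(3) by auto
  next
    case 2
    have "0 \<le> FP_shift Y (assign_lengths Y p (e / 4) r) x"
      "FP_shift Y (assign_lengths Y p (e / 4) r) x < 3 * (e / 4)"
      using PNode.IH(2)[of "e / 4"] PNode.prems 2 by simp_all
    moreover have "(case r of PLeaf _ \<Rightarrow> 0 | PNode _ _ \<Rightarrow> 2 * e) \<in> {0, 2 * e}" by (cases r) auto
    ultimately show ?thesis
      using FP_shift_assign_lengths_right[OF PNode.prems(1,2) 2 PNode.prems(5)] PNode.prems(3) by auto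
  qed
qed

lemma FP_shift_assign_lengths_separates:
  assumes straddle: "clades_straddle Y (PNode l r)" and dist: "distinct (pleaves (PNode l r))"
    and "e > 0" and x: "x \<in> set (pleaves l) \<inter> Y" and y: "y \<in> set (pleaves r) \<inter> Y"
  shows "FP_shift Y (assign_lengths Y p e (PNode l r)) x
       \<noteq> FP_shift Y (assign_lengths Y p e (PNode l r)) y"
proof -
  let ?D = "FP_shift Y (assign_lengths Y p e (PNode l r))"
  have "l = PLeaf x \<and> ?D x = 0 \<or> e \<le> ?D x \<and> ?D x < 2 * e"
  proof (cases l)
    case (PLeaf z)
    then show ?thesis using FP_shift_assign_lengths_left[OF straddle dist, of x p e] x by auto
  next
    case (PNode a b)
    have "0 \<le> FP_shift Y (assign_lengths Y p (e / 4) l) x"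
      "FP_shift Y (assign_lengths Y p (e / 4) l) x < 3 * (e / 4)"
      using FP_shift_assign_lengths_bounds[of Y l "e / 4" x p] x straddle dist \<open>e > 0\<close> by simp_all
    then show ?thesis
      using FP_shift_assign_lengths_left[OF straddle dist, of x p e] x PNode
      by (simp del: assign_lengths.simps)
  qed
  moreover have "r = PLeaf y \<and> ?D y = 0 \<or> 2 * e \<le> ?D y"
  proof (cases r)
    case (PLeaf z)
    then show ?thesis using FP_shift_assign_lengths_right[OF straddle dist, of y p e] y by auto
  next
    case (PNode a b)
    have "0 \<le> FP_shift Y (assign_lengths Y p (e / 4) r) y"
      using FP_shift_assign_lengths_bounds[of Y r "e / 4" y p] y straddle dist \<open>e > 0\<close> by simp
    then show ?thesis
      using FP_shift_assign_lengths_right[OF straddle dist, of y p e] y PNode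
      by (simp del: assign_lengths.simps)
  qed
  moreover have "\<not> (l = PLeaf x \<and> r = PLeaf y)"
    using straddle x y by auto
  ultimately show ?thesis using \<open>e > 0\<close> by auto
qed

lemma inj_on_FP_shift_assign_lengths:
  assumes "clades_straddle Y t" and "distinct (pleaves t)" and "e > 0"
  shows "inj_on (FP_shift Y (assign_lengths Y p e t)) (set (pleaves t) \<inter> Y)"
  using assms
proof (induction t arbitrary: e)
  case (PLeaf z)
  then show ?case by (simp add: inj_on_def)
next
  case (PNode l r)
  let ?D = "FP_shift Y (assign_lengths Y p e (PNode l r))"
  let ?L = "set (pleaves l) \<inter> Y" and ?R = "set (pleaves r) \<inter> Y"
  have e4: "e / 4 > 0" using PNode.prems(3) by simp
  have left: "?D x = (case l of PLeaf _ \<Rightarrow> 0 | PNode _ _ \<Rightarrow> e)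
      + FP_shift Y (assign_lengths Y p (e / 4) l) x"
    if "x \<in> ?L" for x
    using FP_shift_assign_lengths_left[OF PNode.prems(1,2)] that by blast
  have right: "?D x = (case r of PLeaf _ \<Rightarrow> 0 | PNode _ _ \<Rightarrow> 2 * e)
      + FP_shift Y (assign_lengths Y p (e / 4) r) x"
    if "x \<in> ?R" for x
    using FP_shift_assign_lengths_right[OF PNode.prems(1,2)] that by blast
  have "inj_on ?D ?L"
  proof (rule inj_onI)
    fix x y assume x: "x \<in> ?L" and y: "y \<in> ?L" and "?D x = ?D y"
    then have "FP_shift Y (assign_lengths Y p (e / 4) l) x = FP_shift Y (assign_lengths Y p (e / 4) l) y"
      using left[OF x] left[OF y] by simp
    moreover have "inj_on (FP_shift Y (assign_lengths Y p (e / 4) l)) ?L"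
      using PNode.IH(1)[OF _ _ e4] PNode.prems by simp
    ultimately show "x = y" using x y by (auto dest: inj_onD)
  qed
  moreover have "inj_on ?D ?R"
  proof (rule inj_onI)
    fix x y assume x: "x \<in> ?R" and y: "y \<in> ?R" and "?D x = ?D y"
    then have "FP_shift Y (assign_lengths Y p (e / 4) r) x = FP_shift Y (assign_lengths Y p (e / 4) r) y"
      using right[OF x] right[OF y] by simp
    moreover have "inj_on (FP_shift Y (assign_lengths Y p (e / 4) r)) ?R"
      using PNode.IH(2)[OF _ _ e4] PNode.prems by simp
    ultimately show "x = y" using x y by (auto dest: inj_onD)
  qed
  moreover have "?D x \<noteq> ?D y" if "x \<in> ?L" and "y \<in> ?R" for x y
    using FP_shift_assign_lengths_separates[OF PNode.prems that] .
  ultimately have "inj_on ?D (?L \<union> ?R)"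
    by (auto simp add: inj_on_Un simp del: assign_lengths.simps)
  moreover have "set (pleaves (PNode l r)) \<inter> Y = ?L \<union> ?R" by auto
  ultimately show ?case by (simp del: assign_lengths.simps)
qed

lemma reversing_targets_exist:
  fixes A D :: "'a \<Rightarrow> real"
  assumes "finite L" and "Y \<subseteq> L" and "inj_on D Y"
  obtains g :: "'a \<Rightarrow> real" and K where "\<forall>x\<in>L. A x < g x" and "inj_on g L"
    and "\<forall>x\<in>Y. \<forall>z\<in>L - Y. g z < g x" and "\<forall>x\<in>Y. g x = K - D x / 2"
proof -
  obtain f where "bij_betw f L {0..<card L}"
    using ex_bij_betw_finite_nat[OF assms(1)] by blast
  then have f_inj: "inj_on f L" and f_less: "\<forall>x\<in>L. f x < card L"
    by (auto simp: bij_betw_def)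
  define S where "S = (\<Sum>x\<in>L. \<bar>A x\<bar> + \<bar>D x\<bar>)"
  have S: "\<bar>A x\<bar> \<le> S" "\<bar>D x\<bar> \<le> S" if "x \<in> L" for x
    using member_le_sum[of x L "\<lambda>x. \<bar>A x\<bar> + \<bar>D x\<bar>"] assms(1) that
    unfolding S_def by auto
  define M where "M = S + 1"
  define K where "K = M + real (card L) + S"
  define g where "g x = (if x \<in> Y then K - D x / 2 else M + real (f x))" for x
  have sep: "g z < g x" if "x \<in> Y" and "z \<in> L - Y" for x z
  proof -
    have "real (f z) < real (card L)" using f_less that(2) by simp
    moreover have "\<bar>D x\<bar> \<le> S" using S(2) that(1) assms(2) by blast
    ultimately show ?thesis using that unfolding g_def K_def M_def by (simp add: abs_le_iff)
  qed
  have A_less: "A x < g x" if "x \<in> L" for x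
    using S[OF that] unfolding g_def K_def M_def by (simp add: abs_le_iff)
  have "inj_on g Y"
    using assms(3) by (auto simp: inj_on_def g_def)
  moreover have "inj_on g (L - Y)"
    using f_inj by (auto simp: inj_on_def g_def)
  moreover have "g x \<noteq> g z" if "x \<in> Y" and "z \<in> L - Y" for x z
    using sep[OF that] by simp
  then have "g ` Y \<inter> g ` (L - Y) = {}" by blast
  ultimately have "inj_on g (Y \<union> (L - Y))"
    unfolding inj_on_Un by blast
  moreover have "Y \<union> (L - Y) = L" using assms(2) by blast
  ultimately have "inj_on g L" by simp
  moreover have "\<forall>x\<in>Y. g x = K - D x / 2" by (simp add: g_def)
  ultimately show thesis using that[of g K] A_less sep by blast
qed

lemma reversing_lengths_exist:
  assumes straddle: "clades_straddle Y T" and dist: "distinct (pleaves T)"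
    and T: "T = PNode l r" and Y: "Y \<subseteq> set (pleaves T)"
  obtains W where "shape W = T" and "pos_lengths W" and "inj_on (FP W) (set (pleaves T))"
    and "\<forall>x\<in>Y. \<forall>z\<in>set (pleaves T) - Y. FP W z < FP W x"
    and "\<forall>x\<in>Y. \<forall>y\<in>Y. FP W x < FP W y \<longrightarrow> FP (induced Y W) y < FP (induced Y W) x"
proof -
  let ?L = "set (pleaves T)"
  define W0 where "W0 = assign_lengths Y (\<lambda>_. 0) 1 T"
  have "?L \<inter> Y = Y" using Y by blast
  then have "inj_on (FP_shift Y W0) Y"
    using inj_on_FP_shift_assign_lengths[OF straddle dist, of 1 "\<lambda>_. 0"] by (simp add: W0_def)
  then obtain g K where g_gt: "\<forall>x\<in>?L. FP W0 x < g x" and g_inj: "inj_on g ?L"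
    and g_sep: "\<forall>x\<in>Y. \<forall>z\<in>?L - Y. g z < g x" and g_Y: "\<forall>x\<in>Y. g x = K - FP_shift Y W0 x / 2"
    using reversing_targets_exist[OF _ Y, of "FP_shift Y W0" "FP W0"] by blast
  define W where "W = assign_lengths Y (\<lambda>x. g x - FP W0 x) 1 T"
  have FP_W: "FP W x = g x" if "x \<in> ?L" for x
    using FP_by_assign_lengths_pendant[of l r x card Y "\<lambda>x. g x - FP W0 x" 1 "\<lambda>_. 0"] that dist
    by (simp add: W_def W0_def T FP_eq_FP_by_card)
  have shift_W: "FP_shift Y W x = FP_shift Y W0 x" if "x \<in> Y" for x
    using FP_shift_assign_lengths_pendant[of l r x Y] that Y dist unfolding W_def W0_def T by blast
  obtain c where c: "\<And>x. x \<in> ?L \<inter> Y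
      \<Longrightarrow> FP (induced Y W) x + c = FP_by (\<lambda>S. card (S \<inter> Y)) W x"
    using FP_induced[of W Y] straddle T by (auto simp: W_def)
  have induced_W: "FP (induced Y W) x = K + FP_shift Y W0 x / 2 - c" if x: "x \<in> Y" for x
  proof -
    have "x \<in> ?L" using x Y by blast
    then have "FP (induced Y W) x = FP_shift Y W x + FP W x - c"
      using c[of x] x unfolding FP_shift_def by simp
    then show ?thesis using shift_W[OF x] FP_W[OF \<open>x \<in> ?L\<close>] g_Y x by simp
  qed
  show thesis
  proof (rule that)
    show "shape W = T" by (simp add: W_def)
    show "pos_lengths W"
      unfolding W_def using g_gt by (intro pos_lengths_assign_lengths[OF straddle]) auto
    show "inj_on (FP W) ?L" using g_inj FP_W inj_on_cong by blast
    show "\<forall>x\<in>Y. \<forall>z\<in>?L - Y. FP W z < FP W x" using g_sep FP_W Y by auto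
    show "\<forall>x\<in>Y. \<forall>y\<in>Y. FP W x < FP W y \<longrightarrow> FP (induced Y W) y < FP (induced Y W) x"
    proof (intro ballI impI)
      fix x y assume "x \<in> Y" and "y \<in> Y" and "FP W x < FP W y"
      then show "FP (induced Y W) y < FP (induced Y W) x"
        using FP_W g_Y induced_W Y by (simp add: subset_iff)
    qed
  qed
qed

theorem theorem2:
  fixes X X' :: "'a set" and T :: "'a ptree"
  assumes "phylo_tree X T"
    and "card X \<ge> 2"
    and "X' \<subseteq> \<Union> (cherries T)"
    and "\<forall>c\<in>cherries T. card (X' \<inter> c) = 1"
  shows "\<exists>W. shape W = T \<and> pos_lengths W \<and>
           strict_ranking X W \<and> reversible X W X' \<and>
           (\<forall>x\<in>X. (\<forall>y\<in>X. FP W y \<le> FP W x) \<longrightarrow> x \<in> X - X') \<and>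
           (\<forall>x\<in>X. (\<forall>y\<in>X. FP W x \<le> FP W y) \<longrightarrow> x \<notin> X - X')"
proof -
  have dist: "distinct (pleaves T)" and X: "set (pleaves T) = X"
    using assms(1) by (auto simp: phylo_tree_def)
  obtain l r where T: "T = PNode l r"
    using assms(2) X by (cases T) auto
  have straddle: "clades_straddle (X - X') T"
    using clades_straddle_one_per_cherry[OF assms(1,4)] .
  then obtain y z where y: "y \<in> X - X'" and z: "z \<in> X" "z \<notin> X - X'"
    using T X by auto
  obtain W where W: "shape W = T" "pos_lengths W" "inj_on (FP W) X"
    and sep: "\<forall>x\<in>X - X'. \<forall>z\<in>X - (X - X'). FP W z < FP W x"
    and rev: "\<forall>x\<in>X - X'. \<forall>y\<in>X - X'. FP W x < FP W y \<longrightarrow>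
                FP (induced (X - X') W) y < FP (induced (X - X') W) x"
    using reversing_lengths_exist[OF straddle dist T] X by auto
  have "\<forall>x\<in>X. (\<forall>y\<in>X. FP W y \<le> FP W x) \<longrightarrow> x \<in> X - X'"
    using sep y by (meson Diff_iff not_le)
  moreover have "\<forall>x\<in>X. (\<forall>y\<in>X. FP W x \<le> FP W y) \<longrightarrow> x \<notin> X - X'"
    using sep z by (meson Diff_iff not_le)
  ultimately show ?thesis
    using W rev unfolding reversible_def strict_ranking_def by blast
qed

end
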